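(* Let $m\ge 1$ and let $a_0,a_1,\dots,a_m$ be nonnegative integers, not all zero, and let $C_0>0$. Consider the problem of maximizing the score $S=\sum_{i=0}^{m} a_i m_i$ over real numbers $m_0,\dots,m_m\ge 0$ subject to the cost constraint $\frac12\sum_{i=0}^{m} a_i\, 2^i\, m_i^2\le C_0$. Then this problem has an optimal solution of the form $m_i=c\,2^{-i}$ for all $i=0,\dots,m$, for some constant $c>0$. That is, the proportional multiplicity assignment is optimal for every received word.
   Context: Setting: a Reed–Solomon code of length $N$ and dimension $K$ over $GF(2^m)$ whose symbols are sent as $m$ bits each over a binary erasure channel. A received symbol in which exactly $i$ bits are erased is said to be of type $i$; it is consistent with $2^i$ candidate symbols. In algebraic soft decoding (ASD), each of the $2^i$ candidates of a type-$i$ symbol receives the same real multiplicity $m_i\ge 0$. If the received word has $a_i$ symbols of type $i$, the score is $S=\sum_i a_i m_i$ and the (large-multiplicity approximation of the) cost is $C=\frac12\sum_i a_i 2^i m_i^2$. *)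

theory Defs
  imports "HOL-Analysis.Analysis"
begin

text \<open>Score S = sum_{i=0}^m a_i m_i and cost C = 1/2 sum_{i=0}^m a_i 2^i m_i^2,
  where a i is the number of received symbols of type i and mu i the multiplicity.\<close>

definition score :: "nat \<Rightarrow> (nat \<Rightarrow> nat) \<Rightarrow> (nat \<Rightarrow> real) \<Rightarrow> real" where
  "score m a mu = (\<Sum>i=0..m. real (a i) * mu i)"

definition cost :: "nat \<Rightarrow> (nat \<Rightarrow> nat) \<Rightarrow> (nat \<Rightarrow> real) \<Rightarrow> real" where
  "cost m a mu = (1/2) * (\<Sum>i=0..m. real (a i) * 2 ^ i * (mu i)^2)"

definition feasible :: "nat \<Rightarrow> (nat \<Rightarrow> nat) \<Rightarrow> real \<Rightarrow> (nat \<Rightarrow> real) \<Rightarrow> bool" where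
  "feasible m a C0 mu \<longleftrightarrow> (\<forall>i\<in>{0..m}. mu i \<ge> 0) \<and> cost m a mu \<le> C0"

end

theory Submission
  imports Defs
begin

text \<open>Each term of the score is bounded by the tangent estimate
  \<open>2 c x \<le> p x\<^sup>2 + c\<^sup>2 / p\<close> with \<open>p = 2\<^sup>i\<close>, which is tight exactly at \<open>x = c / 2\<^sup>i\<close>.
  Summed with the weights \<open>a i\<close>, it bounds the score of every assignment by its cost plus
  a constant, with equality for the proportional assignment; choosing \<open>c\<close> so that the
  proportional assignment exhausts the budget makes it optimal.\<close>

definition weight :: "nat \<Rightarrow> (nat \<Rightarrow> nat) \<Rightarrow> real" where
  "weight m a = (\<Sum>i=0..m. real (a i) / 2 ^ i)"

lemma weight_pos:
  assumes "\<exists>i\<in>{0..m}. a i \<noteq> 0"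
  shows "weight m a > 0"
proof -
  obtain j where j: "j \<in> {0..m}" "a j \<noteq> 0" using assms by blast
  have "0 < real (a j) / 2 ^ j" using j by simp
  also have "\<dots> \<le> weight m a"
    unfolding weight_def by (rule member_le_sum) (use j in auto)
  finally show ?thesis .
qed

lemma score_proportional: "score m a (\<lambda>i. c / 2 ^ i) = c * weight m a"
  unfolding score_def weight_def by (simp add: sum_distrib_left mult.commute)

lemma cost_proportional: "cost m a (\<lambda>i. c / 2 ^ i) = c\<^sup>2 * weight m a / 2"
proof -
  have "(\<Sum>i=0..m. real (a i) * 2 ^ i * (c / 2 ^ i)\<^sup>2) = c\<^sup>2 * weight m a"
    unfolding weight_def sum_distrib_left
    by (rule sum.cong) (simp_all add: power2_eq_square field_simps)
  then show ?thesis
    unfolding cost_def by simp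
qed

lemma tangent_bound:
  fixes c x p :: real
  assumes "p > 0"
  shows "2 * c * x \<le> p * x\<^sup>2 + c\<^sup>2 / p"
proof -
  have "p * x\<^sup>2 + c\<^sup>2 / p - 2 * c * x = (p * x - c)\<^sup>2 / p"
    using assms by (simp add: field_simps power2_eq_square)
  moreover have "(p * x - c)\<^sup>2 / p \<ge> 0" using assms by simp
  ultimately show ?thesis by linarith
qed

lemma score_le_cost_bound:
  "2 * c * score m a mu \<le> 2 * cost m a mu + c\<^sup>2 * weight m a"
proof -
  have "2 * c * score m a mu = (\<Sum>i=0..m. real (a i) * (2 * c * mu i))"
    unfolding score_def by (simp add: sum_distrib_left mult_ac)
  also have "\<dots> \<le> (\<Sum>i=0..m. real (a i) * (2 ^ i * (mu i)\<^sup>2 + c\<^sup>2 / 2 ^ i))"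
    by (intro sum_mono mult_left_mono tangent_bound) simp_all
  also have "\<dots> = 2 * cost m a mu + c\<^sup>2 * weight m a"
    unfolding cost_def weight_def
    by (simp add: distrib_left sum.distrib sum_distrib_left mult_ac)
  finally show ?thesis .
qed

lemma score_le_proportional:
  assumes "c > 0" and "2 * cost m a mu \<le> c\<^sup>2 * weight m a"
  shows "score m a mu \<le> c * weight m a"
proof -
  have "2 * c * score m a mu \<le> 2 * c * (c * weight m a)"
    using score_le_cost_bound[of c m a mu] assms(2) by (simp add: power2_eq_square)
  then show ?thesis using assms(1) by simp
qed

theorem lemma2:
  fixes m :: nat and a :: "nat \<Rightarrow> nat" and C0 :: real
  assumes "m \<ge> 1"
    and "\<exists>i\<in>{0..m}. a i \<noteq> 0"
    and "C0 > 0"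
  shows "\<exists>c::real. c > 0 \<and>
           feasible m a C0 (\<lambda>i. c / 2 ^ i) \<and>
           (\<forall>mu. feasible m a C0 mu \<longrightarrow> score m a mu \<le> score m a (\<lambda>i. c / 2 ^ i))"
proof -
  define c where "c = sqrt (2 * C0 / weight m a)"
  have "weight m a > 0" using weight_pos assms(2) .
  then have "c > 0" and budget: "c\<^sup>2 * weight m a = 2 * C0"
    unfolding c_def using assms(3) by simp_all
  moreover have "feasible m a C0 (\<lambda>i. c / 2 ^ i)"
    unfolding feasible_def cost_proportional budget using \<open>c > 0\<close> by simp
  moreover have "score m a mu \<le> score m a (\<lambda>i. c / 2 ^ i)" if "feasible m a C0 mu" for mu
    unfolding score_proportional
    using score_le_proportional[OF \<open>c > 0\<close>] that budget by (simp add: feasible_def)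
  ultimately show ?thesis by blast
qed

end
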